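(* Let $F$ be a complete, algebraically closed non-Archimedean valued field with absolute value $|\cdot|$, and let $f=\sum_j f_jX^j\in F[[X,X^{-1}]]$ be a non-zero Laurent series with $|f_j|\to0$ as $|j|\to\infty$. Let $k_1,k_2\in\mathbb{Z}$, not both zero, and let $B\in\mathbb{Z}_{>0}$ with $|k_1|,|k_2|\le B$. Then for any $b\in F$ with $|b|=1$, the Laurent series $$a(X):=f(X^{k_1})-bX^{k_2}$$ is either identically zero or has at most $c_fB$ zeroes (counted with multiplicity) of absolute value $1$ in $F$, where the constant $c_f$ is defined as follows: (i) if $|f|_1>1$, then $c_f=K(f,1)-k(f,1)$; (ii) if $|f|_1<1$, then $c_f=0$; (iii) if $|f|_1=1$ and $K(f,1)\neq k(f,1)$, then $c_f=2\max(|K(f,1)|,|k(f,1)|)$; (iv) if $|f|_1=1$ and $K(f,1)=k(f,1)$, then $c_f=2\max(|K(f,1)|,1)$ if $\tilde f=0$, and $c_f=2\max(|K(f,1)|,|K(\tilde f,1)|,|k(\tilde f,1)|,1)$ otherwise, where $\tilde f:=\sum_{j\neq k(f,1)} f_jX^j$.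
   Context: For a Laurent series $g=\sum_n g_nX^n$ with $|g_n|\to 0$ as $|n|\to\infty$, define $|g|_1:=\sup_{n}|g_n|$, $K(g,1):=\sup\{n\in\mathbb{Z}: |g_n|=|g|_1\}$ and $k(g,1):=\inf\{n\in\mathbb{Z}: |g_n|=|g|_1\}$ (the largest and smallest index of a coefficient of maximal absolute value). *)

theory Defs
  imports Complex_Main "HOL-Computational_Algebra.Polynomial"
begin

definition nonarch_abs :: "('a::field \<Rightarrow> real) \<Rightarrow> bool" where
  "nonarch_abs av \<longleftrightarrow>
     (\<forall>x. av x \<ge> 0) \<and> (\<forall>x. av x = 0 \<longleftrightarrow> x = 0) \<and>
     (\<forall>x y. av (x * y) = av x * av y) \<and>
     (\<forall>x y. av (x + y) \<le> max (av x) (av y))"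

definition av_conv :: "('a::field \<Rightarrow> real) \<Rightarrow> (nat \<Rightarrow> 'a) \<Rightarrow> 'a \<Rightarrow> bool" where
  "av_conv av s L \<longleftrightarrow> (\<lambda>n. av (s n - L)) \<longlonglongrightarrow> 0"

definition av_cauchy :: "('a::field \<Rightarrow> real) \<Rightarrow> (nat \<Rightarrow> 'a) \<Rightarrow> bool" where
  "av_cauchy av s \<longleftrightarrow> (\<forall>e>0. \<exists>N. \<forall>m\<ge>N. \<forall>n\<ge>N. av (s m - s n) < e)"

definition av_complete :: "('a::field \<Rightarrow> real) \<Rightarrow> bool" where
  "av_complete av \<longleftrightarrow> (\<forall>s. av_cauchy av s \<longrightarrow> (\<exists>L. av_conv av s L))"

definition alg_closed_field :: "'a::field itself \<Rightarrow> bool" where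
  "alg_closed_field _ \<longleftrightarrow> (\<forall>p :: 'a poly. degree p \<ge> 1 \<longrightarrow> (\<exists>x. poly p x = 0))"

section \<open>Laurent series (coefficient functions \<open>int \<Rightarrow> 'a\<close>)\<close>

definition restricted :: "('a::field \<Rightarrow> real) \<Rightarrow> (int \<Rightarrow> 'a) \<Rightarrow> bool" where
  "restricted av g \<longleftrightarrow>
     ((\<lambda>n. av (g n)) \<longlongrightarrow> 0) at_top \<and> ((\<lambda>n. av (g n)) \<longlongrightarrow> 0) at_bot"

definition leval :: "('a::field \<Rightarrow> real) \<Rightarrow> (int \<Rightarrow> 'a) \<Rightarrow> 'a \<Rightarrow> 'a" where
  "leval av g x = (THE L. av_conv av (\<lambda>N. \<Sum>j\<in>{-int N..int N}. g j * x powi j) L)"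

definition lsubst :: "('a::field \<Rightarrow> real) \<Rightarrow> (int \<Rightarrow> 'a) \<Rightarrow> int \<Rightarrow> (int \<Rightarrow> 'a)" where
  "lsubst av f k n =
     (if k = 0 then (if n = 0 then leval av f 1 else 0)
      else if k dvd n then f (n div k) else 0)"

text \<open>Coefficients of (X - z)^m * g (a finite convolution).\<close>
definition lin_pow_mult :: "'a::field \<Rightarrow> nat \<Rightarrow> (int \<Rightarrow> 'a) \<Rightarrow> (int \<Rightarrow> 'a)" where
  "lin_pow_mult z m g n = (\<Sum>i\<le>m. of_nat (m choose i) * (- z) ^ (m - i) * g (n - int i))"

definition zmult :: "('a::field \<Rightarrow> real) \<Rightarrow> (int \<Rightarrow> 'a) \<Rightarrow> 'a \<Rightarrow> nat" where
  "zmult av a z = (GREATEST m. \<exists>g. restricted av g \<and> a = lin_pow_mult z m g)"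

definition gauss1 :: "('a::field \<Rightarrow> real) \<Rightarrow> (int \<Rightarrow> 'a) \<Rightarrow> real" where
  "gauss1 av g = (SUP n. av (g n))"

definition Kmax :: "('a::field \<Rightarrow> real) \<Rightarrow> (int \<Rightarrow> 'a) \<Rightarrow> int" where
  "Kmax av g = (GREATEST n. av (g n) = gauss1 av g)"

definition kmin :: "('a::field \<Rightarrow> real) \<Rightarrow> (int \<Rightarrow> 'a) \<Rightarrow> int" where
  "kmin av g = (LEAST n. av (g n) = gauss1 av g)"

definition cconst :: "('a::field \<Rightarrow> real) \<Rightarrow> (int \<Rightarrow> 'a) \<Rightarrow> int" where
  "cconst av f =
    (let K = Kmax av f; k = kmin av f; ft = f(k := 0) in
     if gauss1 av f > 1 then K - k
     else if gauss1 av f < 1 then 0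
     else if K \<noteq> k then 2 * max \<bar>K\<bar> \<bar>k\<bar>
     else if ft = (\<lambda>_. 0) then 2 * max \<bar>K\<bar> 1
     else 2 * max (max \<bar>K\<bar> \<bar>Kmax av ft\<bar>) (max \<bar>kmin av ft\<bar> 1))"

end

theory Submission
  imports Defs
begin

text \<open>
  Each zero \<open>z\<close> of \<open>a\<close> on the unit circle splits off a factor: \<open>a = (X - z) g\<close> with \<open>g\<close>
  again restricted (synthetic division, which needs completeness). Multiplying a restricted
  series by \<open>X - z\<close> with \<open>|z| = 1\<close> keeps the Gauss norm and the smallest dominant index and
  raises the largest one by one, and distinct linear factors can be split off one after the
  other. Hence the zeros on the unit circle, counted with multiplicity, number at most
  \<open>K(a,1) - k(a,1)\<close>.

  It remains to bound \<open>K(a,1) - k(a,1)\<close> for \<open>a = f(X^k1) - b X^k2\<close>. If \<open>|f|_1 > 1\<close>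
  the monomial does not affect the dominant coefficients, which sit at \<open>k1\<close> times the dominant
  indices of \<open>f\<close>; if \<open>|f|_1 < 1\<close> the only dominant index is \<open>k2\<close>; if \<open>|f|_1 = 1\<close> every
  dominant index is \<open>k2\<close> or \<open>k1 j\<close>, where \<open>j\<close> is dominant for \<open>f\<close> or, when the unique
  dominant coefficient of \<open>f\<close> is cancelled by \<open>b\<close>, for \<open>f\<close> with that coefficient removed. For \<open>k1 = 0\<close> the series has two
  terms, and both can be dominant only if \<open>|f(1)| = 1\<close>, which forces \<open>c_f \<ge> 1\<close>.
\<close>

locale nonarch_valued_field =
  fixes av :: "'a::field \<Rightarrow> real"
  assumes nonarch: "nonarch_abs av"
begin

lemma av_nonneg [simp]: "0 \<le> av x"
  and av_eq_0_iff [simp]: "av x = 0 \<longleftrightarrow> x = 0"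
  and av_mult: "av (x * y) = av x * av y"
  and av_add_le: "av (x + y) \<le> max (av x) (av y)"
  using nonarch unfolding nonarch_abs_def by blast+

lemma av_0 [simp]: "av 0 = 0"
  by simp

lemma av_1 [simp]: "av 1 = 1"
  using av_mult[of 1 1] av_eq_0_iff[of 1] by simp

lemma av_minus [simp]: "av (- x) = av x"
proof -
  have "(av (-1))\<^sup>2 = 1"
    using av_mult[of "-1" "-1"] by (simp add: power2_eq_square)
  then have "av (-1) = 1"
    using av_nonneg[of "-1"] by (simp add: power2_eq_1_iff)
  then show ?thesis
    using av_mult[of "-1" x] by simp
qed

lemma av_diff_le: "av (x - y) \<le> max (av x) (av y)"
  using av_add_le[of x "- y"] by simp

lemma av_diff_le_add: "av (x - y) \<le> av x + av y"
  by (rule order_trans[OF av_diff_le]) (intro max.boundedI; simp)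

lemma av_diff_commute: "av (x - y) = av (y - x)"
  by (metis av_minus minus_diff_eq)

lemma av_add_eq_right:
  assumes "av x < av y"
  shows "av (x + y) = av y"
proof -
  have "av y \<le> max (av (x + y)) (av x)"
    using av_add_le[of "x + y" "- x"] by simp
  then show ?thesis
    using av_add_le[of x y] assms by linarith
qed

lemma av_diff_eq_left: "av y < av x \<Longrightarrow> av (x - y) = av x"
  using av_add_eq_right[of "- y" x] by (simp add: add.commute)

lemma av_diff_eq_right: "av x < av y \<Longrightarrow> av (x - y) = av y"
  using av_diff_eq_left av_diff_commute by metis

lemma av_mult_unit: "av z = 1 \<Longrightarrow> av (z * x) = av x"
  by (simp add: av_mult)

lemma av_power: "av (x ^ n) = av x ^ n"
  by (induction n) (simp_all add: av_mult)

lemma av_inverse: "av (inverse x) = inverse (av x)"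
  using av_mult[of x "inverse x"] by (cases "x = 0") (simp_all add: field_simps)

lemma av_power_int_unit: "av z = 1 \<Longrightarrow> av (z powi n) = 1"
  by (simp add: power_int_def av_power av_inverse)

lemma av_sum_le:
  assumes "\<And>i. i \<in> A \<Longrightarrow> av (f i) \<le> e" and "0 \<le> e"
  shows "av (sum f A) \<le> e"
  using assms
proof (induction A rule: infinite_finite_induct)
  case (insert x F)
  then have "av (f x) \<le> e" and "av (sum f F) \<le> e"
    by simp_all
  then show ?case
    using av_add_le[of "f x" "sum f F"] by (simp add: insert.hyps)
qed simp_all

lemma restricted_iff:
  "restricted av g \<longleftrightarrow> (\<forall>e>0. \<exists>M. \<forall>n. M \<le> \<bar>n\<bar> \<longrightarrow> av (g n) < e)"
proof -
  have "restricted av g \<longleftrightarrow>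
      (\<forall>e>0. (\<exists>N. \<forall>n\<ge>N. av (g n) < e) \<and> (\<exists>N. \<forall>n\<le>N. av (g n) < e))"
    unfolding restricted_def tendsto_iff dist_real_def eventually_at_top_linorder
      eventually_at_bot_linorder by auto
  also have "\<dots> \<longleftrightarrow> (\<forall>e>0. \<exists>M. \<forall>n. M \<le> \<bar>n\<bar> \<longrightarrow> av (g n) < e)"
  proof (intro all_cong1 imp_cong refl iffI)
    fix e
    assume "(\<exists>N. \<forall>n\<ge>N. av (g n) < e) \<and> (\<exists>N. \<forall>n\<le>N. av (g n) < e)"
    then obtain N1 N2 where "\<forall>n\<ge>N1. av (g n) < e" "\<forall>n\<le>N2. av (g n) < e"
      by blast
    then show "\<exists>M. \<forall>n. M \<le> \<bar>n\<bar> \<longrightarrow> av (g n) < e"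
      by (intro exI[of _ "max \<bar>N1\<bar> \<bar>N2\<bar>"]) (smt (verit))
  next
    fix e
    assume "\<exists>M. \<forall>n. M \<le> \<bar>n\<bar> \<longrightarrow> av (g n) < e"
    then obtain M where "\<forall>n. M \<le> \<bar>n\<bar> \<longrightarrow> av (g n) < e"
      by blast
    then show "(\<exists>N. \<forall>n\<ge>N. av (g n) < e) \<and> (\<exists>N. \<forall>n\<le>N. av (g n) < e)"
      by (intro conjI exI[of _ "\<bar>M\<bar>"] exI[of _ "- \<bar>M\<bar>"]) (smt (verit))+
  qed
  finally show ?thesis .
qed

lemma restrictedI:
  "(\<And>e. 0 < e \<Longrightarrow> \<exists>M. \<forall>n. M \<le> \<bar>n\<bar> \<longrightarrow> av (g n) < e) \<Longrightarrow> restricted av g"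
  unfolding restricted_iff by blast

lemma restrictedE:
  assumes "restricted av g" and "0 < e"
  obtains M where "0 \<le> M" and "\<And>n. M \<le> \<bar>n\<bar> \<Longrightarrow> av (g n) < e"
proof -
  obtain M where "\<forall>n. M \<le> \<bar>n\<bar> \<longrightarrow> av (g n) < e"
    using assms unfolding restricted_iff by blast
  then show thesis
    by (intro that[of "\<bar>M\<bar>"]) auto
qed

lemma restricted_diff:
  assumes "restricted av u" and "restricted av v"
  shows "restricted av (\<lambda>n. u n - v n)"
proof (rule restrictedI)
  fix e :: real
  assume "0 < e"
  then obtain M1 M2 where "\<And>n. M1 \<le> \<bar>n\<bar> \<Longrightarrow> av (u n) < e" "\<And>n. M2 \<le> \<bar>n\<bar> \<Longrightarrow> av (v n) < e"
    using assms by (metis restrictedE)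
  then show "\<exists>M. \<forall>n. M \<le> \<bar>n\<bar> \<longrightarrow> av (u n - v n) < e"
    by (intro exI[of _ "max M1 M2"]) (smt (verit) av_diff_le)
qed

lemma restricted_cmult: "restricted av g \<Longrightarrow> restricted av (\<lambda>n. c * g n)"
  unfolding restricted_def av_mult by (auto intro: tendsto_mult_right_zero)

lemma restricted_shift:
  assumes "restricted av g"
  shows "restricted av (\<lambda>n. g (n - 1))"
proof (rule restrictedI)
  fix e :: real
  assume "0 < e"
  then obtain M where "\<And>n. M \<le> \<bar>n\<bar> \<Longrightarrow> av (g n) < e"
    using assms by (metis restrictedE)
  then show "\<exists>M. \<forall>n. M \<le> \<bar>n\<bar> \<longrightarrow> av (g (n - 1)) < e"
    by (intro exI[of _ "M + 1"]) (smt (verit))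
qed

lemma restricted_fun_upd:
  assumes "restricted av g"
  shows "restricted av (g(k := x))"
proof (rule restrictedI)
  fix e :: real
  assume "0 < e"
  then obtain M where "\<And>n. M \<le> \<bar>n\<bar> \<Longrightarrow> av (g n) < e"
    using assms by (metis restrictedE)
  then show "\<exists>M. \<forall>n. M \<le> \<bar>n\<bar> \<longrightarrow> av ((g(k := x)) n) < e"
    by (intro exI[of _ "max M (\<bar>k\<bar> + 1)"]) auto
qed

lemma restricted_zero: "restricted av (\<lambda>_. 0)"
  by (rule restrictedI) auto

lemma restricted_monomial: "restricted av (\<lambda>n. if n = k then x else 0)"
proof -
  have "(\<lambda>n. if n = k then x else 0) = (\<lambda>_. 0)(k := x)"
    by auto
  then show ?thesis
    using restricted_fun_upd[OF restricted_zero] by simp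
qed

lemma restricted_lsubst:
  assumes "restricted av f"
  shows "restricted av (lsubst av f k)"
proof (cases "k = 0")
  case True
  have "lsubst av f k = (\<lambda>_. 0)(0 := leval av f 1)"
    using True unfolding lsubst_def by auto
  then show ?thesis
    using restricted_fun_upd[OF restricted_zero] by simp
next
  case False
  show ?thesis
  proof (rule restrictedI)
    fix e :: real
    assume "0 < e"
    then obtain M where "0 \<le> M" and M: "\<And>n. M \<le> \<bar>n\<bar> \<Longrightarrow> av (f n) < e"
      using assms by (metis restrictedE)
    have "av (lsubst av f k n) < e" if n: "\<bar>k\<bar> * M \<le> \<bar>n\<bar>" for n
    proof (cases "k dvd n")
      case True
      then obtain j where j: "n = k * j"
        by blast
      have "\<bar>k\<bar> * M \<le> \<bar>k\<bar> * \<bar>j\<bar>"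
        using n j by (simp add: abs_mult)
      then have "M \<le> \<bar>j\<bar>"
        using False by simp
      then show ?thesis
        using M j False unfolding lsubst_def by simp
    qed (use \<open>0 < e\<close> False in \<open>simp add: lsubst_def\<close>)
    then show "\<exists>M. \<forall>n. M \<le> \<bar>n\<bar> \<longrightarrow> av (lsubst av f k n) < e"
      by blast
  qed
qed

lemma restricted_mult_power_int:
  assumes "restricted av g" and "av z = 1"
  shows "restricted av (\<lambda>j. g j * z powi j)"
  using assms unfolding restricted_iff by (simp add: av_mult av_power_int_unit)

section \<open>Gauss norm and dominant indices\<close>

lemma gauss1_eqI: "(\<And>n. av (g n) \<le> G) \<Longrightarrow> av (g n0) = G \<Longrightarrow> gauss1 av g = G"
  unfolding gauss1_def by (rule cSup_eq_maximum) auto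

lemma Kmax_eqI:
  "gauss1 av g = G \<Longrightarrow> av (g K) = G \<Longrightarrow> (\<And>n. av (g n) = G \<Longrightarrow> n \<le> K) \<Longrightarrow> Kmax av g = K"
  unfolding Kmax_def by (rule Greatest_equality) auto

lemma kmin_eqI:
  "gauss1 av g = G \<Longrightarrow> av (g k) = G \<Longrightarrow> (\<And>n. av (g n) = G \<Longrightarrow> k \<le> n) \<Longrightarrow> kmin av g = k"
  unfolding kmin_def by (rule Least_equality) auto

context
  fixes g :: "int \<Rightarrow> 'a"
  assumes restricted: "restricted av g" and nonzero: "g \<noteq> (\<lambda>_. 0)"
begin

lemma gauss1_attained: "\<exists>n0. (\<forall>n. av (g n) \<le> av (g n0)) \<and> 0 < av (g n0)"
proof -
  obtain n1 where "g n1 \<noteq> 0"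
    using nonzero by auto
  then have pos: "0 < av (g n1)"
    using av_nonneg[of "g n1"] av_eq_0_iff[of "g n1"] by linarith
  then obtain M where M: "\<And>n. M \<le> \<bar>n\<bar> \<Longrightarrow> av (g n) < av (g n1)"
    using restricted by (metis restrictedE)
  define A where "A = {-M..M}"
  have "n1 \<in> A"
    using M[of n1] unfolding A_def by fastforce
  then obtain n0 where "n0 \<in> A" and n0: "av (g n0) = Max ((\<lambda>n. av (g n)) ` A)"
    using Max_in[of "(\<lambda>n. av (g n)) ` A"] unfolding A_def by fastforce
  have inside: "av (g n) \<le> av (g n0)" if "n \<in> A" for n
    using that n0 unfolding A_def by simp
  have "av (g n) \<le> av (g n0)" for n
    using inside[of n] inside[OF \<open>n1 \<in> A\<close>] M[of n] unfolding A_def by fastforce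
  moreover have "0 < av (g n0)"
    using pos inside[OF \<open>n1 \<in> A\<close>] by linarith
  ultimately show ?thesis
    by blast
qed

lemma gauss1_pos: "0 < gauss1 av g"
  and av_le_gauss1: "av (g n) \<le> gauss1 av g"
proof -
  obtain n0 where "\<forall>n. av (g n) \<le> av (g n0)" and "0 < av (g n0)"
    using gauss1_attained by blast
  moreover from this have "gauss1 av g = av (g n0)"
    by (intro gauss1_eqI) auto
  ultimately show "0 < gauss1 av g" and "av (g n) \<le> gauss1 av g"
    by simp_all
qed

lemma finite_dominant_indices: "finite {n. av (g n) = gauss1 av g}"
proof -
  obtain M where "\<And>n. M \<le> \<bar>n\<bar> \<Longrightarrow> av (g n) < gauss1 av g"
    using restricted gauss1_pos by (metis restrictedE)
  then have "{n. av (g n) = gauss1 av g} \<subseteq> {-M..M}"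
    by (smt (verit, best) atLeastAtMost_iff mem_Collect_eq subsetI)
  then show ?thesis
    using finite_subset by blast
qed

lemma dominant_indices_nonempty: "{n. av (g n) = gauss1 av g} \<noteq> {}"
proof -
  obtain n0 where "\<forall>n. av (g n) \<le> av (g n0)"
    using gauss1_attained by blast
  then have "gauss1 av g = av (g n0)"
    by (intro gauss1_eqI) auto
  then show ?thesis
    by auto
qed

lemma Kmax_eq_Max: "Kmax av g = Max {n. av (g n) = gauss1 av g}"
  using finite_dominant_indices dominant_indices_nonempty Max_in
  by (intro Kmax_eqI[OF refl]) auto

lemma kmin_eq_Min: "kmin av g = Min {n. av (g n) = gauss1 av g}"
  using finite_dominant_indices dominant_indices_nonempty Min_in
  by (intro kmin_eqI[OF refl]) auto

lemma av_Kmax: "av (g (Kmax av g)) = gauss1 av g"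
  using Max_in[OF finite_dominant_indices dominant_indices_nonempty] Kmax_eq_Max by simp

lemma av_kmin: "av (g (kmin av g)) = gauss1 av g"
  using Min_in[OF finite_dominant_indices dominant_indices_nonempty] kmin_eq_Min by simp

lemma le_Kmax: "av (g n) = gauss1 av g \<Longrightarrow> n \<le> Kmax av g"
  using Kmax_eq_Max finite_dominant_indices by simp

lemma kmin_le: "av (g n) = gauss1 av g \<Longrightarrow> kmin av g \<le> n"
  using kmin_eq_Min finite_dominant_indices by simp

lemma kmin_le_Kmax: "kmin av g \<le> Kmax av g"
  using kmin_le[OF av_Kmax] .

lemma av_less_gauss1: "n < kmin av g \<or> Kmax av g < n \<Longrightarrow> av (g n) < gauss1 av g"
  using av_le_gauss1[of n] le_Kmax[of n] kmin_le[of n] by fastforce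

end

end

section \<open>Multiplication by linear factors\<close>

definition gauss_width :: "('a::field \<Rightarrow> real) \<Rightarrow> (int \<Rightarrow> 'a) \<Rightarrow> int" where
  "gauss_width av g = Kmax av g - kmin av g"

definition mult_lin :: "'a::field \<Rightarrow> (int \<Rightarrow> 'a) \<Rightarrow> int \<Rightarrow> 'a" where
  "mult_lin z g n = g (n - 1) - z * g n"

lemma mult_lin_zero [simp]: "mult_lin z (\<lambda>_. 0) = (\<lambda>_. 0)"
  by (auto simp: mult_lin_def)

lemma foldr_mult_lin_zero [simp]: "foldr mult_lin zs (\<lambda>_. 0) = (\<lambda>_. 0)"
  by (induction zs) simp_all

lemma lin_pow_mult_Suc: "lin_pow_mult z (Suc m) g = mult_lin z (lin_pow_mult z m g)"
proof
  fix n
  txt \<open>Pascal's rule, after shifting the summation index by one.\<close>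
  define c where "c = - z"
  define h where "h i = of_nat (m choose i) * c ^ (Suc m - i) * g (n - int i)" for i
  have A: "(\<Sum>i\<le>Suc m. h i) = (\<Sum>i\<le>m. h i)"
    by (simp add: h_def binomial_eq_0)
  have B: "c * (\<Sum>i\<le>m. of_nat (m choose i) * c ^ (m - i) * g (n - int i)) = (\<Sum>i\<le>m. h i)"
    unfolding sum_distrib_left h_def by (rule sum.cong) (auto simp: Suc_diff_le)
  have C: "(\<Sum>i\<le>Suc m. h i) =
      c ^ Suc m * g n + (\<Sum>i\<le>m. of_nat (m choose Suc i) * c ^ (m - i) * g (n - 1 - int i))"
    unfolding sum.atMost_Suc_shift h_def by (simp add: algebra_simps)
  have D: "lin_pow_mult z (Suc m) g n = c ^ Suc m * g n +
      (\<Sum>i\<le>m. (of_nat (m choose i) + of_nat (m choose Suc i)) * c ^ (m - i) * g (n - 1 - int i))"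
    unfolding lin_pow_mult_def sum.atMost_Suc_shift c_def by (simp add: algebra_simps)
  have E: "mult_lin z (lin_pow_mult z m g) n =
      (\<Sum>i\<le>m. of_nat (m choose i) * c ^ (m - i) * g (n - 1 - int i))
      + c * (\<Sum>i\<le>m. of_nat (m choose i) * c ^ (m - i) * g (n - int i))"
    unfolding mult_lin_def lin_pow_mult_def c_def by (simp add: algebra_simps)
  show "lin_pow_mult z (Suc m) g n = mult_lin z (lin_pow_mult z m g) n"
    unfolding D E B A[symmetric] C by (simp add: algebra_simps sum.distrib)
qed

lemma lin_pow_mult_0: "lin_pow_mult z 0 g = g"
  by (simp add: lin_pow_mult_def fun_eq_iff)

lemma lin_pow_mult_eq_funpow: "lin_pow_mult z m g = (mult_lin z ^^ m) g"
  by (induction m) (simp_all add: lin_pow_mult_0 lin_pow_mult_Suc)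

context nonarch_valued_field
begin

lemma restricted_mult_lin: "restricted av g \<Longrightarrow> restricted av (mult_lin z g)"
  unfolding mult_lin_def by (intro restricted_diff restricted_shift restricted_cmult)

lemma restricted_foldr_mult_lin: "restricted av g \<Longrightarrow> restricted av (foldr mult_lin zs g)"
  by (induction zs) (simp_all add: restricted_mult_lin)

lemma restricted_funpow_mult_lin: "restricted av g \<Longrightarrow> restricted av ((mult_lin z ^^ m) g)"
  by (induction m) (simp_all add: restricted_mult_lin)

lemma gauss_width_nonneg: "restricted av g \<Longrightarrow> g \<noteq> (\<lambda>_. 0) \<Longrightarrow> 0 \<le> gauss_width av g"
  unfolding gauss_width_def using kmin_le_Kmax by simp

lemma gauss_width_le:
  assumes "restricted av g" and "g \<noteq> (\<lambda>_. 0)"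
    and "\<And>n n'. av (g n) = gauss1 av g \<Longrightarrow> av (g n') = gauss1 av g \<Longrightarrow> n - n' \<le> C"
  shows "gauss_width av g \<le> C"
  unfolding gauss_width_def using assms av_Kmax av_kmin by blast

lemma gauss_width_le_double:
  assumes "restricted av g" and "g \<noteq> (\<lambda>_. 0)"
    and "\<And>n. av (g n) = gauss1 av g \<Longrightarrow> \<bar>n\<bar> \<le> R"
  shows "gauss_width av g \<le> 2 * R"
proof (rule gauss_width_le[OF assms(1,2)])
  fix n n'
  assume "av (g n) = gauss1 av g" and "av (g n') = gauss1 av g"
  then have "\<bar>n\<bar> \<le> R" and "\<bar>n'\<bar> \<le> R"
    using assms(3) by blast+
  then show "n - n' \<le> 2 * R"
    by arith
qed

lemma mult_lin_unit:
  assumes z: "av z = 1" and g: "restricted av g" "g \<noteq> (\<lambda>_. 0)"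
  shows "mult_lin z g \<noteq> (\<lambda>_. 0)" and "gauss_width av (mult_lin z g) = gauss_width av g + 1"
proof -
  define G K k where "G = gauss1 av g" and "K = Kmax av g" and "k = kmin av g"
  note less = av_less_gauss1[OF g, folded G_def K_def k_def]
  have bound: "av (mult_lin z g n) \<le> G" for n
  proof -
    have "max (av (g (n - 1))) (av (z * g n)) \<le> G"
      using av_le_gauss1[OF g] by (simp add: av_mult_unit[OF z] G_def)
    then show ?thesis
      unfolding mult_lin_def using av_diff_le order_trans by blast
  qed
  have small: "av (mult_lin z g n) < G" if "n < k \<or> K + 1 < n" for n
    unfolding mult_lin_def using that less[of n] less[of "n - 1"] av_mult_unit[OF z]
      av_diff_le[of "g (n - 1)" "z * g n"] by fastforce
  txt \<open>\<open>g K\<close> moves to index \<open>K + 1\<close> and \<open>- z * g k\<close> stays at index \<open>k\<close>; at both places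
    the other summand is strictly smaller, so neither is cancelled.\<close>
  have top: "av (mult_lin z g (K + 1)) = G"
    unfolding mult_lin_def using av_diff_eq_left[of "z * g (K + 1)" "g K"] less[of "K + 1"]
      av_Kmax[OF g] av_mult_unit[OF z] by (simp add: G_def K_def)
  have bottom: "av (mult_lin z g k) = G"
    unfolding mult_lin_def using av_diff_eq_right[of "g (k - 1)" "z * g k"] less[of "k - 1"]
      av_kmin[OF g] av_mult_unit[OF z] by (simp add: G_def k_def)
  have gauss: "gauss1 av (mult_lin z g) = G"
    using bound top by (rule gauss1_eqI)
  show "mult_lin z g \<noteq> (\<lambda>_. 0)"
    using top gauss1_pos[OF g] G_def by auto
  have dominant: "k \<le> n \<and> n \<le> K + 1" if "av (mult_lin z g n) = G" for n
    using small[of n] that by (meson less_irrefl not_le)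
  have "Kmax av (mult_lin z g) = K + 1"
    using dominant by (intro Kmax_eqI[OF gauss top]) simp
  moreover have "kmin av (mult_lin z g) = k"
    using dominant by (intro kmin_eqI[OF gauss bottom]) simp
  ultimately show "gauss_width av (mult_lin z g) = gauss_width av g + 1"
    unfolding gauss_width_def K_def k_def by simp
qed

lemma gauss_width_foldr_mult_lin:
  assumes "\<forall>z\<in>set zs. av z = 1" and "restricted av g" and "g \<noteq> (\<lambda>_. 0)"
  shows "foldr mult_lin zs g \<noteq> (\<lambda>_. 0) \<and>
    gauss_width av (foldr mult_lin zs g) = gauss_width av g + int (length zs)"
  using assms
proof (induction zs)
  case (Cons z zs)
  then show ?case
    using mult_lin_unit[OF _ restricted_foldr_mult_lin] by simp
qed simp

lemma mult_lin_coprime: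
  assumes "z \<noteq> w" and "mult_lin z u = mult_lin w v" and "restricted av u" and "restricted av v"
  shows "\<exists>q. restricted av q \<and> u = mult_lin w q \<and> v = mult_lin z q"
proof -
  define q where "q n = inverse (z - w) * (u n - v n)" for n
  have "restricted av q"
    unfolding q_def using assms(3,4) by (intro restricted_cmult restricted_diff)
  moreover have "u n = mult_lin w q n" and "v n = mult_lin z q n" for n
  proof -
    have key: "u (n - 1) - v (n - 1) = z * u n - w * v n"
      using fun_cong[OF assms(2), of n] unfolding mult_lin_def by (simp add: algebra_simps)
    have "mult_lin w q n = inverse (z - w) * ((u (n - 1) - v (n - 1)) - w * (u n - v n))"
      unfolding mult_lin_def q_def by (simp add: algebra_simps)
    also have "\<dots> = inverse (z - w) * ((z - w) * u n)"
      unfolding key by (simp add: algebra_simps)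
    finally show "u n = mult_lin w q n"
      using assms(1) by simp
    have "mult_lin z q n = inverse (z - w) * ((u (n - 1) - v (n - 1)) - z * (u n - v n))"
      unfolding mult_lin_def q_def by (simp add: algebra_simps)
    also have "\<dots> = inverse (z - w) * ((z - w) * v n)"
      unfolding key by (simp add: algebra_simps)
    finally show "v n = mult_lin z q n"
      using assms(1) by simp
  qed
  ultimately show ?thesis
    by auto
qed

lemma foldr_mult_lin_coprime:
  assumes "w \<notin> set zs" and "foldr mult_lin zs u = mult_lin w v"
    and "restricted av u" and "restricted av v"
  shows "\<exists>q. restricted av q \<and> u = mult_lin w q \<and> v = foldr mult_lin zs q"
  using assms
proof (induction zs arbitrary: v)
  case (Cons z zs)
  then obtain q1 where q1: "restricted av q1" "foldr mult_lin zs u = mult_lin w q1" "v = mult_lin z q1"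
    using mult_lin_coprime[of z w "foldr mult_lin zs u" v] restricted_foldr_mult_lin by fastforce
  with Cons obtain q where "restricted av q" "u = mult_lin w q" "q1 = foldr mult_lin zs q"
    by auto
  with q1 show ?case
    by auto
qed auto

lemma foldr_mult_lin_coprime_funpow:
  assumes "w \<notin> set zs" and "foldr mult_lin zs u = (mult_lin w ^^ m) v"
    and "restricted av u" and "restricted av v"
  shows "\<exists>q. restricted av q \<and> u = (mult_lin w ^^ m) q"
  using assms
proof (induction m arbitrary: u)
  case (Suc m)
  then obtain q1 where q1: "restricted av q1" "u = mult_lin w q1" "(mult_lin w ^^ m) v = foldr mult_lin zs q1"
    using foldr_mult_lin_coprime[of w zs u "(mult_lin w ^^ m) v"] restricted_funpow_mult_lin by auto
  with Suc obtain q where "restricted av q" "q1 = (mult_lin w ^^ m) q"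
    by metis
  with q1 show ?case
    by auto
qed auto

end

section \<open>Evaluation and the factor theorem\<close>

definition sym_psum :: "(int \<Rightarrow> 'a::field) \<Rightarrow> nat \<Rightarrow> 'a" where
  "sym_psum t N = (\<Sum>j\<in>{-int N..int N}. t j)"

lemma sym_psum_diff: "sym_psum (\<lambda>j. u j - v j) = (\<lambda>N. sym_psum u N - sym_psum v N)"
  unfolding sym_psum_def by (simp add: sum_subtractf)

context nonarch_valued_field
begin

lemma av_conv_unique:
  assumes "av_conv av s L1" and "av_conv av s L2"
  shows "L1 = L2"
proof -
  have "av (L1 - L2) \<le> av (s n - L2) + av (s n - L1)" for n
    using av_diff_le_add[of "s n - L2" "s n - L1"] by simp
  moreover have "(\<lambda>n. av (s n - L2) + av (s n - L1)) \<longlonglongrightarrow> 0 + 0"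
    using assms unfolding av_conv_def by (intro tendsto_add)
  ultimately have "av (L1 - L2) \<le> 0"
    by (intro LIMSEQ_le_const) auto
  then show ?thesis
    using av_nonneg[of "L1 - L2"] by simp
qed

lemma av_conv_diff:
  assumes "av_conv av s L1" and "av_conv av s' L2"
  shows "av_conv av (\<lambda>N. s N - s' N) (L1 - L2)"
  unfolding av_conv_def
proof (rule tendsto_sandwich[of "\<lambda>_. 0" _ _ "\<lambda>n. av (s n - L1) + av (s' n - L2)"])
  have "av (s n - s' n - (L1 - L2)) \<le> av (s n - L1) + av (s' n - L2)" for n
  proof -
    have "s n - s' n - (L1 - L2) = (s n - L1) - (s' n - L2)"
      by (simp add: algebra_simps)
    then show ?thesis
      by (simp only: av_diff_le_add)
  qed
  then show "\<forall>\<^sub>F n in sequentially. av (s n - s' n - (L1 - L2)) \<le> av (s n - L1) + av (s' n - L2)"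
    by simp
  show "(\<lambda>n. av (s n - L1) + av (s' n - L2)) \<longlonglongrightarrow> 0"
    using tendsto_add[OF assms[unfolded av_conv_def]] by simp
qed simp_all

lemma av_conv_eventually_const: "(\<And>N. N0 \<le> N \<Longrightarrow> s N = c) \<Longrightarrow> av_conv av s c"
  unfolding av_conv_def
  by (rule tendsto_eventually) (auto simp: eventually_at_top_linorder intro!: exI[of _ N0])

lemma av_limit_le:
  assumes "av_conv av s L" and "\<And>N. N0 \<le> N \<Longrightarrow> av (s N) \<le> c" and "0 \<le> c"
  shows "av L \<le> c"
proof -
  have "av L - c \<le> av (s n - L)" if "N0 \<le> n" for n
  proof -
    have "av L \<le> max (av (s n - L)) (av (s n))"
      using av_add_le[of "L - s n" "s n"] av_diff_commute[of L "s n"] by simp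
    also have "\<dots> \<le> av (s n - L) + c"
      using assms(2)[OF that] assms(3) by (intro max.boundedI) (simp_all add: add_increasing)
    finally show ?thesis
      by simp
  qed
  then have "av L - c \<le> 0"
    using assms(1) unfolding av_conv_def
    by (intro LIMSEQ_le_const[of _ 0]) (auto intro: exI[of _ N0])
  then show ?thesis
    by simp
qed

lemma av_limit_sym_psum_le:
  assumes "av_conv av (sym_psum t) L" and "\<And>j. av (t j) \<le> c" and "0 \<le> c"
  shows "av L \<le> c"
proof (rule av_limit_le[OF assms(1) _ assms(3)])
  fix N :: nat
  show "av (sym_psum t N) \<le> c"
    unfolding sym_psum_def by (rule av_sum_le) (use assms in auto)
qed

lemma av_cauchy_sym_psum:
  assumes "restricted av t"
  shows "av_cauchy av (sym_psum t)"
  unfolding av_cauchy_def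
proof (intro allI impI)
  fix e :: real
  assume "0 < e"
  then obtain M where "0 \<le> M" and M: "\<And>j. M \<le> \<bar>j\<bar> \<Longrightarrow> av (t j) < e / 2"
    using assms by (metis restrictedE half_gt_zero)
  have step: "av (sym_psum t m - sym_psum t n) \<le> e / 2" if "nat M \<le> n" "n \<le> m" for m n
  proof -
    have "{-int n..int n} \<subseteq> {-int m..int m}"
      using that by auto
    then have "sym_psum t m - sym_psum t n = sum t ({-int m..int m} - {-int n..int n})"
      unfolding sym_psum_def by (simp add: sum_diff)
    also have "av \<dots> \<le> e / 2"
      by (rule av_sum_le) (use M that \<open>0 < e\<close> in \<open>auto intro: less_imp_le\<close>)
    finally show ?thesis .
  qed
  have "av (sym_psum t m - sym_psum t n) < e" if "nat M \<le> m" "nat M \<le> n" for m n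
  proof -
    have "av (sym_psum t m - sym_psum t n) \<le> e / 2"
    proof (cases "n \<le> m")
      case False
      then show ?thesis
        using step[of m n] that av_diff_commute by simp
    qed (use step that in simp)
    then show ?thesis
      using \<open>0 < e\<close> by linarith
  qed
  then show "\<exists>N. \<forall>m\<ge>N. \<forall>n\<ge>N. av (sym_psum t m - sym_psum t n) < e"
    by blast
qed

lemma av_conv_sym_psum:
  assumes "av_complete av" and "restricted av t"
  shows "av_conv av (sym_psum t) (THE L. av_conv av (sym_psum t) L)"
proof -
  obtain L where L: "av_conv av (sym_psum t) L"
    using assms av_cauchy_sym_psum unfolding av_complete_def by blast
  then show ?thesis
    by (rule theI) (use L av_conv_unique in blast)
qed

lemma leval_conv:
  assumes "av_complete av" and "restricted av g" and "av z = 1"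
  shows "av_conv av (sym_psum (\<lambda>j. g j * z powi j)) (leval av g z)"
proof -
  have "sym_psum (\<lambda>j. g j * z powi j) = (\<lambda>N. \<Sum>j\<in>{-int N..int N}. g j * z powi j)"
    by (simp add: fun_eq_iff sym_psum_def)
  then show ?thesis
    using av_conv_sym_psum[OF assms(1) restricted_mult_power_int[OF assms(2,3)]]
    unfolding leval_def by simp
qed

lemma sym_psum_zero_imp_tail_diff:
  assumes "av_complete av" and "restricted av t" and "av_conv av (sym_psum t) 0"
  obtains T where "restricted av T" and "\<And>n. t n = T (n - 1) - T n"
proof -
  define tail where "tail n j = (if n < j then t j else 0)" for n j
  define T where "T n = (THE L. av_conv av (sym_psum (tail n)) L)" for n
  have "restricted av (tail n)" for n
    using assms(2) unfolding restricted_iff tail_def by (metis av_0)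
  then have conv: "av_conv av (sym_psum (tail n)) (T n)" for n
    unfolding T_def by (rule av_conv_sym_psum[OF assms(1)])
  have "t n = T (n - 1) - T n" for n
  proof -
    have "(\<lambda>j. tail (n - 1) j - tail n j) = (\<lambda>j. if j = n then t n else 0)"
      by (auto simp: tail_def fun_eq_iff)
    then have "sym_psum (\<lambda>j. tail (n - 1) j - tail n j) N = t n" if "nat \<bar>n\<bar> \<le> N" for N
      using that by (simp add: sym_psum_def) arith
    then have "av_conv av (sym_psum (\<lambda>j. tail (n - 1) j - tail n j)) (t n)"
      by (rule av_conv_eventually_const)
    moreover have "av_conv av (sym_psum (\<lambda>j. tail (n - 1) j - tail n j)) (T (n - 1) - T n)"
      unfolding sym_psum_diff by (rule av_conv_diff[OF conv conv])
    ultimately show ?thesis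
      by (rule av_conv_unique)
  qed
  moreover have "restricted av T"
  proof (rule restrictedI)
    fix e :: real
    assume "0 < e"
    then obtain M where M: "\<And>j. M \<le> \<bar>j\<bar> \<Longrightarrow> av (t j) < e / 2"
      using assms(2) by (metis restrictedE half_gt_zero)
    have half: "av (T n) \<le> e / 2" if "M \<le> \<bar>n\<bar>" for n
    proof (cases "0 \<le> n")
      case True
      show ?thesis
        by (rule av_limit_sym_psum_le[OF conv])
          (use M True that \<open>0 < e\<close> in \<open>auto simp: tail_def intro: less_imp_le\<close>)
    next
      case False
      txt \<open>Since the whole sum vanishes, \<open>- T n\<close> is the sum of the terms with index \<open>\<le> n\<close>.\<close>
      have "av_conv av (sym_psum (\<lambda>j. t j - tail n j)) (0 - T n)"
        unfolding sym_psum_diff by (rule av_conv_diff[OF assms(3) conv])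
      then have "av (0 - T n) \<le> e / 2"
        by (rule av_limit_sym_psum_le)
          (use M False that \<open>0 < e\<close> in \<open>auto simp: tail_def intro: less_imp_le\<close>)
      then show ?thesis
        by simp
    qed
    show "\<exists>M. \<forall>n. M \<le> \<bar>n\<bar> \<longrightarrow> av (T n) < e"
    proof (intro exI[of _ M] allI impI)
      fix n
      assume "M \<le> \<bar>n\<bar>"
      with half[of n] \<open>0 < e\<close> show "av (T n) < e"
        by linarith
    qed
  qed
  ultimately show ?thesis
    using that by blast
qed

lemma leval_eq_0_imp_mult_lin:
  assumes "av_complete av" and "restricted av a" and "av z = 1" and "leval av a z = 0"
  obtains g where "restricted av g" and "a = mult_lin z g"
proof -
  define t where "t j = a j * z powi j" for j
  have "restricted av t"
    unfolding t_def by (rule restricted_mult_power_int[OF assms(2,3)])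
  moreover have "av_conv av (sym_psum t) 0"
    using leval_conv[OF assms(1-3)] assms(4) unfolding t_def by simp
  ultimately obtain T where T: "restricted av T" "\<And>n. t n = T (n - 1) - T n"
    using sym_psum_zero_imp_tail_diff[OF assms(1)] by blast
  have "z \<noteq> 0"
    using assms(3) by auto
  txt \<open>Synthetic division: \<open>g n = z powi (- n - 1) * (\<Sum>j>n. a j * z powi j)\<close>.\<close>
  define g where "g n = z powi (- n - 1) * T n" for n
  have "restricted av g"
    using T(1) assms(3) unfolding g_def restricted_iff by (simp add: av_mult av_power_int_unit)
  moreover have "a n = mult_lin z g n" for n
  proof -
    have "z * z powi (- n - 1) = z powi (- n)"
      using power_int_add[of z 1 "- n - 1"] \<open>z \<noteq> 0\<close> by simp
    then have "mult_lin z g n = z powi (- n) * (T (n - 1) - T n)"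
      by (simp add: mult_lin_def g_def algebra_simps flip: mult.assoc)
    also have "\<dots> = z powi (- n) * z powi n * a n"
      unfolding T(2)[of n, unfolded t_def, symmetric] by (simp add: ac_simps)
    also have "\<dots> = a n"
      using power_int_add[of z "- n" n] \<open>z \<noteq> 0\<close> by simp
    finally show ?thesis
      by simp
  qed
  ultimately show ?thesis
    using that by blast
qed

section \<open>Zeros on the unit circle\<close>

lemma funpow_mult_lin_le_gauss_width:
  assumes "av z = 1" and "restricted av g" and "(mult_lin z ^^ m) g \<noteq> (\<lambda>_. 0)"
  shows "int m \<le> gauss_width av ((mult_lin z ^^ m) g)"
proof -
  have factor: "(mult_lin z ^^ m) g = foldr mult_lin (replicate m z) g"
    by (simp add: foldr_replicate)
  then have "g \<noteq> (\<lambda>_. 0)"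
    using assms(3) by (auto simp del: foldr_replicate)
  then show ?thesis
    unfolding factor using gauss_width_foldr_mult_lin[of "replicate m z" g] assms(1,2)
      gauss_width_nonneg[OF assms(2)] by simp
qed

context
  fixes a :: "int \<Rightarrow> 'a" and z :: 'a
  assumes restricted: "restricted av a" and nonzero: "a \<noteq> (\<lambda>_. 0)" and unit: "av z = 1"
begin

lemma zmult_bounded:
  assumes "\<exists>g. restricted av g \<and> a = lin_pow_mult z m g"
  shows "m \<le> nat (gauss_width av a)"
proof -
  obtain g where "restricted av g" and "a = (mult_lin z ^^ m) g"
    using assms unfolding lin_pow_mult_eq_funpow by blast
  then have "int m \<le> gauss_width av a"
    using funpow_mult_lin_le_gauss_width[OF unit] nonzero by blast
  then show ?thesis
    by linarith
qed

lemma zmult_factor: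
  obtains g where "restricted av g" and "a = (mult_lin z ^^ zmult av a z) g"
proof -
  have "\<exists>g. restricted av g \<and> a = lin_pow_mult z 0 g"
    using restricted by (auto simp: lin_pow_mult_eq_funpow)
  then have "\<exists>g. restricted av g \<and> a = lin_pow_mult z (zmult av a z) g"
    unfolding zmult_def using zmult_bounded by (rule GreatestI_nat)
  then show ?thesis
    using that unfolding lin_pow_mult_eq_funpow by blast
qed

lemma one_le_zmult:
  assumes "restricted av g" and "a = mult_lin z g"
  shows "1 \<le> zmult av a z"
proof -
  have "\<exists>g. restricted av g \<and> a = lin_pow_mult z 1 g"
    using assms by (auto simp: lin_pow_mult_eq_funpow)
  then show ?thesis
    unfolding zmult_def using zmult_bounded by (rule Greatest_le_nat)
qed

end

lemma factor_unit_zeros: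
  assumes "restricted av a" and "a \<noteq> (\<lambda>_. 0)" and "finite S" and "\<forall>z\<in>S. av z = 1"
  obtains zs g where "restricted av g" and "set zs \<subseteq> S"
    and "length zs = (\<Sum>z\<in>S. zmult av a z)" and "a = foldr mult_lin zs g"
proof -
  from assms(3,4)
  have "\<exists>zs g. restricted av g \<and> set zs \<subseteq> S \<and> length zs = (\<Sum>z\<in>S. zmult av a z) \<and>
      a = foldr mult_lin zs g"
  proof (induction S rule: finite_induct)
    case empty
    then show ?case
      using assms(1) by (intro exI[of _ "[]"]) auto
  next
    case (insert w S)
    then obtain zs g where zs: "restricted av g" "set zs \<subseteq> S"
        "length zs = (\<Sum>z\<in>S. zmult av a z)" "a = foldr mult_lin zs g"
      by auto
    define m where "m = zmult av a w"
    obtain h where "restricted av h" and "a = (mult_lin w ^^ m) h"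
      using zmult_factor[OF assms(1,2)] insert.prems unfolding m_def by auto
    moreover have "w \<notin> set zs"
      using zs(2) insert.hyps(2) by blast
    ultimately obtain q where q: "restricted av q" "g = (mult_lin w ^^ m) q"
      using foldr_mult_lin_coprime_funpow[of w zs g m h] zs(1,4) by auto
    have "a = foldr mult_lin (zs @ replicate m w) q"
      using zs(4) q(2) by (simp add: foldr_replicate)
    moreover have "length (zs @ replicate m w) = (\<Sum>z\<in>insert w S. zmult av a z)"
      using zs(3) insert.hyps unfolding m_def by simp
    ultimately show ?case
      using q(1) zs(2) by (intro exI[of _ "zs @ replicate m w"] exI[of _ q]) auto
  qed
  then show ?thesis
    using that by blast
qed

lemma unit_zeros_bound:
  assumes "av_complete av" and "restricted av a" and "a \<noteq> (\<lambda>_. 0)"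
  defines "Z \<equiv> {z. av z = 1 \<and> leval av a z = 0}"
  shows "finite Z" and "(\<Sum>z\<in>Z. int (zmult av a z)) \<le> gauss_width av a"
proof -
  have unit: "av z = 1" if "z \<in> Z" for z
    using that unfolding Z_def by blast
  have one_le: "1 \<le> zmult av a z" if z: "z \<in> Z" for z
  proof -
    obtain g where "restricted av g" and "a = mult_lin z g"
      using leval_eq_0_imp_mult_lin[OF assms(1,2)] z unfolding Z_def by blast
    then show ?thesis
      using one_le_zmult[OF assms(2,3) unit[OF z]] by blast
  qed
  have sum_le: "int (\<Sum>z\<in>S. zmult av a z) \<le> gauss_width av a" if S: "finite S" "S \<subseteq> Z" for S
  proof -
    have "\<forall>z\<in>S. av z = 1"
      using S(2) unit by blast
    then obtain zs g where g: "restricted av g" and "set zs \<subseteq> S"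
      and length: "length zs = (\<Sum>z\<in>S. zmult av a z)" and a: "a = foldr mult_lin zs g"
      by (rule factor_unit_zeros[OF assms(2,3) S(1)])
    have "g \<noteq> (\<lambda>_. 0)"
      using assms(3) unfolding a by (rule contrapos_nn) simp
    moreover have "\<forall>z\<in>set zs. av z = 1"
      using \<open>set zs \<subseteq> S\<close> \<open>\<forall>z\<in>S. av z = 1\<close> by blast
    ultimately have "gauss_width av a = gauss_width av g + int (length zs)"
      and "0 \<le> gauss_width av g"
      using gauss_width_foldr_mult_lin[of zs g] gauss_width_nonneg[of g] g a by simp_all
    then show ?thesis
      unfolding length by simp
  qed
  have card_le: "int (card S) \<le> gauss_width av a" if S: "finite S" "S \<subseteq> Z" for S
  proof -
    have "card S = (\<Sum>z\<in>S. 1)"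
      by simp
    also have "\<dots> \<le> (\<Sum>z\<in>S. zmult av a z)"
      using S(2) one_le by (intro sum_mono) blast
    finally show ?thesis
      using sum_le[OF S] by linarith
  qed
  show "finite Z"
  proof (rule ccontr)
    assume "infinite Z"
    then obtain S where "finite S" "S \<subseteq> Z" "card S = Suc (nat (gauss_width av a))"
      using infinite_arbitrarily_large by blast
    then show False
      using card_le[of S] by linarith
  qed
  then show "(\<Sum>z\<in>Z. int (zmult av a z)) \<le> gauss_width av a"
    using sum_le[of Z] by simp
qed

section \<open>Dominant indices of \<open>f(X^k1) - b X^k2\<close>\<close>

lemma gauss_width_perturb:
  assumes "restricted av F" and "F \<noteq> (\<lambda>_. 0)" and small: "\<And>n. av (a n - F n) < gauss1 av F"
  shows "gauss_width av a = gauss_width av F"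
proof -
  define G where "G = gauss1 av F"
  have same: "av (a n) = G \<longleftrightarrow> av (F n) = G" and bound: "av (a n) \<le> G" for n
  proof -
    have a: "a n = (a n - F n) + F n"
      by simp
    show "av (a n) \<le> G"
      using av_add_le[of "a n - F n" "F n"] small[of n] av_le_gauss1[OF assms(1,2), of n]
      unfolding G_def by (simp flip: a)
    show "av (a n) = G \<longleftrightarrow> av (F n) = G"
    proof
      assume "av (F n) = G"
      then show "av (a n) = G"
        using av_add_eq_right[of "a n - F n" "F n"] small[of n] unfolding G_def by (simp flip: a)
    next
      assume an: "av (a n) = G"
      show "av (F n) = G"
      proof (rule ccontr)
        assume "av (F n) \<noteq> G"
        then have "av (F n) < G"
          using av_le_gauss1[OF assms(1,2), of n] unfolding G_def by simp
        then have "av (a n) < G"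
          using av_add_le[of "a n - F n" "F n"] small[of n] unfolding G_def by (simp flip: a)
        then show False
          using an by simp
      qed
    qed
  qed
  have "av (a (Kmax av F)) = G"
    using same av_Kmax[OF assms(1,2)] unfolding G_def by blast
  with bound have gauss: "gauss1 av a = G"
    by (rule gauss1_eqI)
  have "Kmax av a = Kmax av F"
    using same av_Kmax[OF assms(1,2)] le_Kmax[OF assms(1,2)]
    by (intro Kmax_eqI[OF gauss]) (simp_all add: G_def)
  moreover have "kmin av a = kmin av F"
    using same av_kmin[OF assms(1,2)] kmin_le[OF assms(1,2)]
    by (intro kmin_eqI[OF gauss]) (simp_all add: G_def)
  ultimately show ?thesis
    by (simp add: gauss_width_def)
qed

lemma gauss_width_monomial:
  assumes "x \<noteq> 0"
  shows "gauss_width av (\<lambda>n. if n = k then x else 0) = 0"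
proof -
  have gauss: "gauss1 av (\<lambda>n. if n = k then x else 0) = av x"
    by (rule gauss1_eqI[of _ _ k]) auto
  have "Kmax av (\<lambda>n. if n = k then x else 0) = k" and "kmin av (\<lambda>n. if n = k then x else 0) = k"
    using assms by (auto intro!: Kmax_eqI[OF gauss] kmin_eqI[OF gauss] split: if_splits)
  then show ?thesis
    by (simp add: gauss_width_def)
qed

lemma lsubst_mult: "k \<noteq> 0 \<Longrightarrow> lsubst av f k (k * j) = f j"
  by (simp add: lsubst_def)

lemma lsubst_not_dvd: "k \<noteq> 0 \<Longrightarrow> \<not> k dvd n \<Longrightarrow> lsubst av f k n = 0"
  by (simp add: lsubst_def)

lemma gauss_lsubst:
  assumes "k \<noteq> 0" and f: "restricted av f" "f \<noteq> (\<lambda>_. 0)"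
  shows "lsubst av f k \<noteq> (\<lambda>_. 0)" and "gauss1 av (lsubst av f k) = gauss1 av f"
    and "gauss_width av (lsubst av f k) \<le> \<bar>k\<bar> * gauss_width av f"
proof -
  define F where "F = lsubst av f k"
  have bound: "av (F n) \<le> gauss1 av f" for n
    using assms av_le_gauss1[OF f] gauss1_pos[OF f] unfolding F_def lsubst_def
    by (auto intro: less_imp_le)
  have top: "av (F (k * Kmax av f)) = gauss1 av f"
    unfolding F_def lsubst_mult[OF assms(1)] by (rule av_Kmax[OF f])
  show "lsubst av f k \<noteq> (\<lambda>_. 0)"
    using top gauss1_pos[OF f] unfolding F_def by auto
  show gauss: "gauss1 av (lsubst av f k) = gauss1 av f"
    unfolding F_def[symmetric] using bound top by (rule gauss1_eqI)
  have dominant: "\<exists>j. n = k * j \<and> kmin av f \<le> j \<and> j \<le> Kmax av f" if "av (F n) = gauss1 av f" for n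
  proof -
    have "k dvd n"
    proof (rule ccontr)
      assume "\<not> k dvd n"
      then show False
        using that gauss1_pos[OF f] lsubst_not_dvd[OF assms(1)] unfolding F_def by simp
    qed
    then obtain j where j: "n = k * j"
      by blast
    then have "av (f j) = gauss1 av f"
      using that lsubst_mult[OF assms(1)] unfolding F_def by simp
    then show ?thesis
      using j le_Kmax[OF f] kmin_le[OF f] by blast
  qed
  have "n - n' \<le> \<bar>k\<bar> * gauss_width av f"
    if n: "av (F n) = gauss1 av f" and n': "av (F n') = gauss1 av f" for n n'
  proof -
    obtain j j' where "n = k * j" "kmin av f \<le> j" "j \<le> Kmax av f"
      and "n' = k * j'" "kmin av f \<le> j'" "j' \<le> Kmax av f"
      using dominant[OF n] dominant[OF n'] by blast
    moreover from this have "\<bar>j - j'\<bar> \<le> gauss_width av f"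
      unfolding gauss_width_def by arith
    ultimately have "n - n' \<le> \<bar>k * (j - j')\<bar>"
      by (simp add: right_diff_distrib)
    also have "\<dots> \<le> \<bar>k\<bar> * gauss_width av f"
      unfolding abs_mult by (rule mult_left_mono) (use \<open>\<bar>j - j'\<bar> \<le> gauss_width av f\<close> in simp_all)
    finally show ?thesis .
  qed
  then show "gauss_width av (lsubst av f k) \<le> \<bar>k\<bar> * gauss_width av f"
    unfolding F_def[symmetric] using gauss
    by (intro gauss_width_le) (simp_all add: F_def restricted_lsubst f \<open>lsubst av f k \<noteq> (\<lambda>_. 0)\<close>)
qed

context
  fixes f :: "int \<Rightarrow> 'a"
  assumes restricted: "restricted av f" and nonzero: "f \<noteq> (\<lambda>_. 0)"
begin

lemma av_less_gauss1_single:
  assumes "Kmax av f = kmin av f" and "j \<noteq> kmin av f"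
  shows "av (f j) < gauss1 av f"
  using assms av_le_gauss1[OF restricted nonzero, of j] le_Kmax[OF restricted nonzero, of j]
    kmin_le[OF restricted nonzero, of j] by fastforce

lemma gauss1_gap:
  assumes "Kmax av f = kmin av f"
  obtains s where "0 \<le> s" and "s < gauss1 av f" and "\<And>j. j \<noteq> kmin av f \<Longrightarrow> av (f j) \<le> s"
proof (cases "f(kmin av f := 0) = (\<lambda>_. 0)")
  case True
  then have "f j = 0" if "j \<noteq> kmin av f" for j
    using that by (metis fun_upd_other)
  then show ?thesis
    using that[of 0] gauss1_pos[OF restricted nonzero] by simp
next
  case False
  define ft where "ft = f(kmin av f := 0)"
  have ft: "restricted av ft" "ft \<noteq> (\<lambda>_. 0)"
    using restricted_fun_upd[OF restricted] False unfolding ft_def by simp_all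
  have "ft (Kmax av ft) \<noteq> 0"
    using av_Kmax[OF ft] gauss1_pos[OF ft] by auto
  then have "Kmax av ft \<noteq> kmin av f" and "ft (Kmax av ft) = f (Kmax av ft)"
    unfolding ft_def by auto
  then have "gauss1 av ft < gauss1 av f"
    using av_Kmax[OF ft] av_less_gauss1_single[OF assms] by metis
  moreover have "av (f j) \<le> gauss1 av ft" if "j \<noteq> kmin av f" for j
    using av_le_gauss1[OF ft, of j] that unfolding ft_def by simp
  ultimately show ?thesis
    using that gauss1_pos[OF ft] by (meson less_imp_le)
qed

context
  assumes complete: "av_complete av"
begin

lemma leval_1_conv: "av_conv av (sym_psum f) (leval av f 1)"
  using leval_conv[OF complete restricted, of 1] by simp

lemma av_leval_1_le: "av (leval av f 1) \<le> gauss1 av f"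
  using leval_1_conv av_le_gauss1[OF restricted nonzero] less_imp_le[OF gauss1_pos[OF restricted nonzero]]
  by (rule av_limit_sym_psum_le)

lemma av_leval_1_eq:
  assumes "Kmax av f = kmin av f"
  shows "av (leval av f 1) = gauss1 av f"
proof -
  define k where "k = kmin av f"
  obtain s where "0 \<le> s" and "s < gauss1 av f" and s: "\<And>j. j \<noteq> k \<Longrightarrow> av (f j) \<le> s"
    using gauss1_gap[OF assms] unfolding k_def by blast
  have "sym_psum (\<lambda>j. if j = k then f k else 0) N = f k" if "nat \<bar>k\<bar> \<le> N" for N
    using that by (simp add: sym_psum_def) arith
  then have "av_conv av (sym_psum (\<lambda>j. if j = k then f k else 0)) (f k)"
    by (rule av_conv_eventually_const)
  then have "av_conv av (sym_psum (\<lambda>j. f j - (if j = k then f k else 0))) (leval av f 1 - f k)"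
    unfolding sym_psum_diff by (rule av_conv_diff[OF leval_1_conv])
  then have "av (leval av f 1 - f k) \<le> s"
    by (rule av_limit_sym_psum_le) (use s \<open>0 \<le> s\<close> in auto)
  then have "av (leval av f 1 - f k) < av (f k)"
    using \<open>s < gauss1 av f\<close> av_kmin[OF restricted nonzero] unfolding k_def by simp
  then have "av ((leval av f 1 - f k) + f k) = av (f k)"
    by (rule av_add_eq_right)
  then show ?thesis
    using av_kmin[OF restricted nonzero] unfolding k_def by simp
qed

lemma one_le_cconst:
  assumes "av (leval av f 1) = 1"
  shows "1 \<le> cconst av f"
proof (cases "gauss1 av f = 1")
  case False
  then have "1 < gauss1 av f" and "Kmax av f \<noteq> kmin av f"
    using av_leval_1_le av_leval_1_eq assms by force+
  then show ?thesis
    using kmin_le_Kmax[OF restricted nonzero] unfolding cconst_def Let_def by auto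
qed (auto simp: cconst_def Let_def)

end

lemma cconst_nonneg: "0 \<le> cconst av f"
  using kmin_le_Kmax[OF restricted nonzero] unfolding cconst_def Let_def by auto

end

end

locale subst_minus_monomial = nonarch_valued_field +
  fixes f :: "int \<Rightarrow> 'a::field" and k1 k2 :: int and b :: 'a and a :: "int \<Rightarrow> 'a"
  assumes restricted_f: "restricted av f" and nonzero_f: "f \<noteq> (\<lambda>_. 0)" and unit_b: "av b = 1"
    and a_def: "a = (\<lambda>n. lsubst av f k1 n - (if n = k2 then b else 0))"
    and nonzero_a: "a \<noteq> (\<lambda>_. 0)"
begin

lemma restricted_a: "restricted av a"
  unfolding a_def by (intro restricted_diff restricted_lsubst restricted_f restricted_monomial)

lemma a_off_k2: "n \<noteq> k2 \<Longrightarrow> a n = lsubst av f k1 n"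
  by (simp add: a_def)

lemma a_k1_mult: "k1 \<noteq> 0 \<Longrightarrow> k1 * j \<noteq> k2 \<Longrightarrow> a (k1 * j) = f j"
  by (simp add: a_off_k2 lsubst_mult)

lemma abs_k1_mult_le: "\<bar>k1 * j\<bar> \<le> max \<bar>k1\<bar> \<bar>k2\<bar> * \<bar>j\<bar>"
  unfolding abs_mult by (rule mult_right_mono) simp_all

lemma gauss_width_a_k1_zero:
  assumes complete: "av_complete av" and "k1 = 0"
  shows "gauss_width av a \<le> cconst av f * max \<bar>k1\<bar> \<bar>k2\<bar>"
proof (rule gauss_width_le[OF restricted_a nonzero_a])
  have support: "n = 0 \<or> n = k2" if "av (a n) = gauss1 av a" for n
    using that gauss1_pos[OF restricted_a nonzero_a] \<open>k1 = 0\<close> unfolding a_def lsubst_def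
    by (cases "n = 0 \<or> n = k2") auto
  fix n n'
  assume n: "av (a n) = gauss1 av a" and n': "av (a n') = gauss1 av a"
  show "n - n' \<le> cconst av f * max \<bar>k1\<bar> \<bar>k2\<bar>"
  proof (cases "n = n'")
    case True
    then show ?thesis
      using cconst_nonneg[OF restricted_f nonzero_f] by simp
  next
    case False
    then have "k2 \<noteq> 0" and "av (a 0) = av (a k2)" and "{n, n'} = {0, k2}"
      using support[OF n] support[OF n'] n n' by auto
    moreover have "a 0 = leval av f 1" and "a k2 = - b"
      using \<open>k2 \<noteq> 0\<close> \<open>k1 = 0\<close> unfolding a_def lsubst_def by simp_all
    ultimately have "1 \<le> cconst av f"
      using one_le_cconst[OF restricted_f nonzero_f complete] unit_b by simp
    moreover have "n - n' \<le> \<bar>k2\<bar>"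
      using \<open>{n, n'} = {0, k2}\<close> False by (auto simp: doubleton_eq_iff)
    ultimately show ?thesis
      using \<open>k1 = 0\<close> by (simp add: order_trans[OF _ mult_right_mono[of 1]])
  qed
qed

lemma gauss_width_a_gauss1_gt1:
  assumes "k1 \<noteq> 0" and "1 < gauss1 av f"
  shows "gauss_width av a \<le> cconst av f * max \<bar>k1\<bar> \<bar>k2\<bar>"
proof -
  note F = gauss_lsubst[OF assms(1) restricted_f nonzero_f]
  have "av (a n - lsubst av f k1 n) < gauss1 av (lsubst av f k1)" for n
    using assms(2) unit_b F(2) by (simp add: a_def)
  then have "gauss_width av a = gauss_width av (lsubst av f k1)"
    using gauss_width_perturb restricted_lsubst[OF restricted_f] F(1) by blast
  also have "\<dots> \<le> \<bar>k1\<bar> * cconst av f"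
    using F(3) assms(2) by (simp add: cconst_def gauss_width_def)
  also have "\<dots> \<le> cconst av f * max \<bar>k1\<bar> \<bar>k2\<bar>"
    using mult_left_mono[of "\<bar>k1\<bar>" "max \<bar>k1\<bar> \<bar>k2\<bar>" "cconst av f"]
      cconst_nonneg[OF restricted_f nonzero_f] by (simp add: mult.commute)
  finally show ?thesis .
qed

lemma gauss_width_a_gauss1_lt1:
  assumes "k1 \<noteq> 0" and "gauss1 av f < 1"
  shows "gauss_width av a \<le> cconst av f * max \<bar>k1\<bar> \<bar>k2\<bar>"
proof -
  define m where "m n = (if n = k2 then - b else 0)" for n
  note F = gauss_lsubst[OF assms(1) restricted_f nonzero_f]
  have "b \<noteq> 0"
    using unit_b by auto
  then have "gauss1 av m = 1"
    unfolding m_def using unit_b by (intro gauss1_eqI[of _ _ k2]) auto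
  moreover have "av (a n - m n) \<le> gauss1 av f" for n
    using av_le_gauss1[OF restricted_lsubst[OF restricted_f] F(1), unfolded F(2)]
    by (simp add: a_def m_def)
  ultimately have small: "av (a n - m n) < gauss1 av m" for n
    using assms(2) le_less_trans by metis
  have "m \<noteq> (\<lambda>_. 0)"
  proof
    assume "m = (\<lambda>_. 0)"
    then have "m k2 = 0"
      by simp
    with \<open>b \<noteq> 0\<close> show False
      by (simp add: m_def)
  qed
  with restricted_monomial have "gauss_width av a = gauss_width av m"
    using small unfolding m_def by (rule gauss_width_perturb)
  also have "\<dots> = 0"
    unfolding m_def using \<open>b \<noteq> 0\<close> by (simp add: gauss_width_monomial)
  finally show ?thesis
    using assms(2) by (simp add: cconst_def)
qed

lemma av_a_le:
  assumes "k1 \<noteq> 0" and "gauss1 av f = 1"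
  shows "av (a n) \<le> 1"
proof -
  note F = gauss_lsubst[OF assms(1) restricted_f nonzero_f]
  have lsubst: "av (lsubst av f k1 n) \<le> 1"
    using av_le_gauss1[OF restricted_lsubst[OF restricted_f] F(1), unfolded F(2)] assms(2) by simp
  show ?thesis
  proof (cases "n = k2")
    case True
    then have "a n = lsubst av f k1 n - b"
      by (simp add: a_def)
    then show ?thesis
      using lsubst unit_b by (simp add: order_trans[OF av_diff_le])
  qed (use lsubst in \<open>simp add: a_off_k2\<close>)
qed

lemma dominant_a:
  assumes "k1 \<noteq> 0" and "av (a n) = gauss1 av a"
  shows "n = k2 \<or> (\<exists>j. n = k1 * j \<and> a n = f j)"
proof (cases "k1 dvd n")
  case False
  then have "n \<noteq> k2 \<Longrightarrow> a n = 0"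
    using assms(1) by (simp add: a_off_k2 lsubst_not_dvd)
  then show ?thesis
    using assms(2) gauss1_pos[OF restricted_a nonzero_a] by auto
qed (use assms(1) a_k1_mult in auto)

lemma gauss_width_a_le_of_dominant_bound:
  assumes "k1 \<noteq> 0" and "1 \<le> X"
    and "\<And>j. av (f j) = gauss1 av a \<Longrightarrow> a (k1 * j) = f j \<Longrightarrow> \<bar>j\<bar> \<le> X"
  shows "gauss_width av a \<le> 2 * X * max \<bar>k1\<bar> \<bar>k2\<bar>"
proof -
  have "\<bar>n\<bar> \<le> max \<bar>k1\<bar> \<bar>k2\<bar> * X" if n: "av (a n) = gauss1 av a" for n
    using dominant_a[OF assms(1) n]
  proof
    assume "n = k2"
    then show ?thesis
      using \<open>1 \<le> X\<close> mult_left_mono[of 1 X "max \<bar>k1\<bar> \<bar>k2\<bar>"] by simp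
  next
    assume "\<exists>j. n = k1 * j \<and> a n = f j"
    then obtain j where j: "n = k1 * j" "a n = f j"
      by blast
    then have "\<bar>j\<bar> \<le> X"
      using assms(3) n by simp
    then have "max \<bar>k1\<bar> \<bar>k2\<bar> * \<bar>j\<bar> \<le> max \<bar>k1\<bar> \<bar>k2\<bar> * X"
      by (rule mult_left_mono) simp
    then show ?thesis
      unfolding j(1) using abs_k1_mult_le[of j] by linarith
  qed
  then have "gauss_width av a \<le> 2 * (max \<bar>k1\<bar> \<bar>k2\<bar> * X)"
    by (rule gauss_width_le_double[OF restricted_a nonzero_a])
  then show ?thesis
    by (simp add: algebra_simps)
qed

lemma gauss_width_a_gauss1_eq1_spread:
  assumes "k1 \<noteq> 0" and "gauss1 av f = 1" and "Kmax av f \<noteq> kmin av f"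
  shows "gauss_width av a \<le> cconst av f * max \<bar>k1\<bar> \<bar>k2\<bar>"
proof -
  define M where "M = max \<bar>Kmax av f\<bar> \<bar>kmin av f\<bar>"
  obtain j where "j \<in> {Kmax av f, kmin av f}" and "k1 * j \<noteq> k2"
  proof (cases "k1 * Kmax av f = k2")
    case True
    then have "k1 * kmin av f \<noteq> k2"
      using assms(1,3) by auto
    then show ?thesis
      using that by blast
  qed (use that in blast)
  then have "av (a (k1 * j)) = 1"
    using a_k1_mult[OF assms(1)] av_Kmax[OF restricted_f nonzero_f]
      av_kmin[OF restricted_f nonzero_f] assms(2) by auto
  with av_a_le[OF assms(1,2)] have "gauss1 av a = 1"
    by (rule gauss1_eqI)
  then have "\<bar>j\<bar> \<le> M" if "av (f j) = gauss1 av a" for j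
    using that le_Kmax[OF restricted_f nonzero_f] kmin_le[OF restricted_f nonzero_f] assms(2)
    unfolding M_def by fastforce
  moreover have "1 \<le> M"
    using assms(3) unfolding M_def by linarith
  ultimately have "gauss_width av a \<le> 2 * M * max \<bar>k1\<bar> \<bar>k2\<bar>"
    using gauss_width_a_le_of_dominant_bound[OF assms(1)] by blast
  then show ?thesis
    using assms(2,3) unfolding cconst_def Let_def M_def by simp
qed

lemma gauss1_fun_upd_kmin_le:
  assumes "k1 \<noteq> 0" and "gauss1 av f = 1" and ft: "f(kmin av f := 0) \<noteq> (\<lambda>_. 0)"
  shows "gauss1 av (f(kmin av f := 0)) \<le> gauss1 av a"
proof -
  define K ft where "K = kmin av f" and "ft = f(K := 0)"
  have ft: "restricted av ft" "ft \<noteq> (\<lambda>_. 0)"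
    using restricted_fun_upd[OF restricted_f] ft unfolding ft_def K_def by auto
  define j0 where "j0 = Kmax av ft"
  have "ft j0 \<noteq> 0"
    using av_Kmax[OF ft] gauss1_pos[OF ft] unfolding j0_def by auto
  then have "j0 \<noteq> K" and "ft j0 = f j0"
    unfolding ft_def by auto
  have "gauss1 av ft \<le> gauss1 av a"
  proof (cases "k1 * j0 = k2")
    case False
    then have "a (k1 * j0) = ft j0"
      using a_k1_mult[OF assms(1)] \<open>ft j0 = f j0\<close> by simp
    then show ?thesis
      using av_Kmax[OF ft] av_le_gauss1[OF restricted_a nonzero_a, of "k1 * j0"]
      unfolding j0_def by simp
  next
    case True
    then have "k1 * K \<noteq> k2"
      using \<open>j0 \<noteq> K\<close> assms(1) by auto
    then have "av (a (k1 * K)) = 1"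
      using a_k1_mult[OF assms(1)] av_kmin[OF restricted_f nonzero_f] assms(2)
      unfolding K_def by simp
    moreover have "av (ft j0) \<le> 1"
      using \<open>ft j0 = f j0\<close> av_le_gauss1[OF restricted_f nonzero_f, of j0] assms(2) by simp
    ultimately show ?thesis
      using av_Kmax[OF ft] av_le_gauss1[OF restricted_a nonzero_a, of "k1 * K"]
      unfolding j0_def by simp
  qed
  then show ?thesis
    unfolding ft_def K_def .
qed

lemma gauss_width_a_gauss1_eq1_single:
  assumes "k1 \<noteq> 0" and "gauss1 av f = 1" and "Kmax av f = kmin av f"
  shows "gauss_width av a \<le> cconst av f * max \<bar>k1\<bar> \<bar>k2\<bar>"
proof -
  define K ft where "K = kmin av f" and "ft = f(K := 0)"
  define X where "X = (if ft = (\<lambda>_. 0) then max \<bar>K\<bar> 1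
    else max (max \<bar>K\<bar> \<bar>Kmax av ft\<bar>) (max \<bar>kmin av ft\<bar> 1))"
  have "\<bar>j\<bar> \<le> X" if j: "av (f j) = gauss1 av a" for j
  proof (cases "j = K")
    case False
    txt \<open>The dominant coefficient \<open>f K\<close> may be cancelled by \<open>b\<close> (if \<open>k1 * K = k2\<close>);
      the other dominant coefficients of \<open>a\<close> are then dominant coefficients of \<open>ft\<close>.\<close>
    then have "ft j = f j"
      unfolding ft_def by simp
    then have "ft j \<noteq> 0"
      using j gauss1_pos[OF restricted_a nonzero_a] by auto
    then have ft: "restricted av ft" "ft \<noteq> (\<lambda>_. 0)"
      unfolding ft_def by (auto intro: restricted_fun_upd[OF restricted_f] simp del: fun_upd_apply)
    then have "av (ft j) = gauss1 av ft"
      using av_le_gauss1[OF ft, of j] gauss1_fun_upd_kmin_le[OF assms(1,2)] j \<open>ft j = f j\<close>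
      unfolding ft_def K_def by fastforce
    then have "kmin av ft \<le> j" and "j \<le> Kmax av ft"
      using le_Kmax[OF ft] kmin_le[OF ft] by auto
    then show ?thesis
      using ft(2) unfolding X_def by auto
  qed (simp add: X_def le_max_iff_disj)
  moreover have "1 \<le> X"
    unfolding X_def by auto
  ultimately have "gauss_width av a \<le> 2 * X * max \<bar>k1\<bar> \<bar>k2\<bar>"
    using gauss_width_a_le_of_dominant_bound[OF assms(1)] by blast
  moreover have "cconst av f = 2 * X"
    using assms(2,3) unfolding cconst_def Let_def X_def ft_def K_def by simp
  ultimately show ?thesis
    by simp
qed

lemma gauss_width_a_le_cconst:
  assumes "av_complete av"
  shows "gauss_width av a \<le> cconst av f * max \<bar>k1\<bar> \<bar>k2\<bar>"
proof (cases "k1 = 0")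
  case False
  consider "1 < gauss1 av f" | "gauss1 av f < 1"
    | "gauss1 av f = 1" "Kmax av f \<noteq> kmin av f" | "gauss1 av f = 1" "Kmax av f = kmin av f"
    by linarith
  then show ?thesis
    using gauss_width_a_gauss1_gt1[OF False] gauss_width_a_gauss1_lt1[OF False]
      gauss_width_a_gauss1_eq1_spread[OF False] gauss_width_a_gauss1_eq1_single[OF False]
    by cases simp_all
qed (use gauss_width_a_k1_zero[OF assms] in simp)

end

theorem mainTheorem2:
  fixes av :: "'a::field \<Rightarrow> real" and f :: "int \<Rightarrow> 'a"
    and k1 k2 B :: int and b :: 'a
  assumes "nonarch_abs av" and "av_complete av" and "alg_closed_field TYPE('a)"
    and "restricted av f" and "f \<noteq> (\<lambda>_. 0)"
    and "k1 \<noteq> 0 \<or> k2 \<noteq> 0" and "B > 0" and "\<bar>k1\<bar> \<le> B" and "\<bar>k2\<bar> \<le> B"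
    and "av b = 1"
  defines "a \<equiv> (\<lambda>n. lsubst av f k1 n - (if n = k2 then b else 0))"
  shows "a = (\<lambda>_. 0) \<or>
    (finite {z. av z = 1 \<and> leval av a z = 0} \<and>
     (\<Sum>z\<in>{z. av z = 1 \<and> leval av a z = 0}. int (zmult av a z)) \<le> cconst av f * B)"
proof (cases "a = (\<lambda>_. 0)")
  case False
  interpret subst_minus_monomial av f k1 k2 b a
    using assms False by unfold_locales simp_all
  have "gauss_width av a \<le> cconst av f * B"
    using gauss_width_a_le_cconst[OF assms(2)] assms(8,9)
      mult_left_mono[of "max \<bar>k1\<bar> \<bar>k2\<bar>" B "cconst av f"] cconst_nonneg[OF assms(4,5)] by simp
  then show ?thesis
    using unit_zeros_bound[OF assms(2) restricted_a nonzero_a] by simp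
qed simp

end
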